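(* There is an absolute constant $C$ such that the following holds. Let $G=(V,E)$ be an undirected unweighted graph on $n$ vertices, let $D\ge1$ be an integer, and let $\chi:V\to[1,D^3]$ be any coloring. For vertices $u,v$ let $H_{uv}=\{x\in V:\mathrm{dist}(u,x)+\mathrm{dist}(x,v)=\mathrm{dist}(u,v)\}$. For integers $a,b\ge0$ with $1\le a+b\le D$ and $h\in V$, let $E^h_{a,b}$ be the edge set of the bipartite graph with two copies of $V$ as sides, where $(u,v)\in E^h_{a,b}$ ($u$ in the left copy, $v$ in the right copy) iff (i) $|H_{uv}|\le D$, (ii) the vertices of $H_{uv}$ receive pairwise distinct colors under $\chi$, and (iii) $h\in H_{uv}$, $\mathrm{dist}(u,h)=a$ and $\mathrm{dist}(h,v)=b$. For each such $(a,b,h)$ fix a minimum vertex cover $(V^{h}_{1,a,b},V^{h}_{2,a,b})$ of this bipartite graph ($V^h_{1,a,b}$ in the left copy, $V^h_{2,a,b}$ in the right copy), and define for each $v\in V$ the set $F_v$ of all $h\in V$ such that $v\in V^h_{1,a,b}\cup V^h_{2,a,b}$ for some $a,b$ with $1\le a+b\le D$. Then $$\sum_{v\in V}|F_v|\le C\,D^5\,\frac{n^2}{\mathsf{RS}(n)}.$$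
   Context: A matching $M$ in a graph is induced if there is a vertex subset $V'$ such that $M$ is exactly the edge set of the subgraph induced by $V'$. A Ruzsa–Szemerédi graph is an undirected unweighted graph on $n$ vertices whose edges can be partitioned into at most $n$ induced matchings; $\mathsf{RS}(n)$ is the largest value such that every Ruzsa–Szemerédi graph on $n$ vertices has at most $n^2/\mathsf{RS}(n)$ edges. *)

theory Defs
  imports Main "HOL-Library.Extended_Nat"
begin

definition simple_graph :: "'a set \<Rightarrow> 'a set set \<Rightarrow> bool" where
  "simple_graph V E \<longleftrightarrow> finite V \<and> E \<subseteq> {{x, y} | x y. x \<in> V \<and> y \<in> V \<and> x \<noteq> y}"

definition walk :: "'a set set \<Rightarrow> 'a list \<Rightarrow> bool" where
  "walk E xs \<longleftrightarrow> xs \<noteq> [] \<and> (\<forall>i. Suc i < length xs \<longrightarrow> {xs ! i, xs ! Suc i} \<in> E)"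

text \<open>Shortest-path distance; infinite if no path exists.\<close>
definition dist :: "'a set set \<Rightarrow> 'a \<Rightarrow> 'a \<Rightarrow> enat" where
  "dist E u v = (INF xs \<in> {xs. walk E xs \<and> hd xs = u \<and> last xs = v}. enat (length xs - 1))"

definition Hset :: "'a set \<Rightarrow> 'a set set \<Rightarrow> 'a \<Rightarrow> 'a \<Rightarrow> 'a set" where
  "Hset V E u v = {x \<in> V. dist E u x + dist E x v = dist E u v}"

text \<open>Edge set of the bipartite graph E^h_{a,b}: pairs (left u, right v).\<close>
definition Eab :: "'a set \<Rightarrow> 'a set set \<Rightarrow> nat \<Rightarrow> ('a \<Rightarrow> nat) \<Rightarrow> nat \<Rightarrow> nat \<Rightarrow> 'a \<Rightarrow> ('a \<times> 'a) set" where
  "Eab V E D \<chi> a b h = {(u, v) \<in> V \<times> V.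
      card (Hset V E u v) \<le> D \<and> inj_on \<chi> (Hset V E u v) \<and>
      h \<in> Hset V E u v \<and> dist E u h = enat a \<and> dist E h v = enat b}"

definition bip_vertex_cover :: "'a set \<Rightarrow> ('a \<times> 'a) set \<Rightarrow> 'a set \<times> 'a set \<Rightarrow> bool" where
  "bip_vertex_cover V B S \<longleftrightarrow> fst S \<subseteq> V \<and> snd S \<subseteq> V \<and>
     (\<forall>(u, v) \<in> B. u \<in> fst S \<or> v \<in> snd S)"

definition min_bip_vertex_cover :: "'a set \<Rightarrow> ('a \<times> 'a) set \<Rightarrow> 'a set \<times> 'a set \<Rightarrow> bool" where
  "min_bip_vertex_cover V B S \<longleftrightarrow> bip_vertex_cover V B S \<and>
     (\<forall>T. bip_vertex_cover V B T \<longrightarrow> card (fst S) + card (snd S) \<le> card (fst T) + card (snd T))"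

definition induced_matching :: "'a set set \<Rightarrow> 'a set set \<Rightarrow> bool" where
  "induced_matching E M \<longleftrightarrow> M \<subseteq> E \<and> (\<forall>e1 \<in> M. \<forall>e2 \<in> M. e1 \<noteq> e2 \<longrightarrow> e1 \<inter> e2 = {}) \<and>
     (\<exists>V'. M = {e \<in> E. e \<subseteq> V'})"

definition RS_graph :: "nat \<Rightarrow> nat set set \<Rightarrow> bool" where
  "RS_graph n E \<longleftrightarrow> simple_graph {..<n} E \<and>
     (\<exists>c. (\<forall>e \<in> E. c e < n) \<and> (\<forall>i < n. induced_matching E {e \<in> E. c e = i}))"

text \<open>Maximum number of edges of an RS graph on n vertices (= n^2 / RS(n)).\<close>
definition RS_max_edges :: "nat \<Rightarrow> nat" where
  "RS_max_edges n = Max {card E | E. RS_graph n E}"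

text \<open>RS(n): the largest value r with every RS graph on n vertices having at most n^2/r edges.\<close>
definition RS :: "nat \<Rightarrow> real" where
  "RS n = real (n ^ 2) / real (RS_max_edges n)"

end

theory Submission
  imports Defs
begin

text \<open>
  A minimum vertex cover of the bipartite graph E^h_{a,b} is at most twice as large as a maximal
  matching M_h in it. Fix a, b and a colour c. If u and v are both covered by M_h and (u, v) lies
  in M_{h'} with h, h' of colour c, then h and h' both lie in H_{uv} at distance a from u and b
  from v, and since the colouring is injective on H_{uv}, h = h'. So the M_h of one colour form a
  family of at most n induced matchings. Splitting V into three blocks of at most n/2 vertices and
  placing the left copy of one block and the right copy of another one in disjoint halves of
  {0, ..., n-1} turns this family into an RS graph, whence the M_h of one colour have at most
  9 n^2/RS(n) edges in total. Summing over the D^3 colours and the at most 4 D^2 pairs (a, b)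
  gives the bound with C = 72.
\<close>

definition bip_matching :: "('a \<times> 'b) set \<Rightarrow> bool" where
  "bip_matching M \<longleftrightarrow> inj_on fst M \<and> inj_on snd M"

text \<open>An edge from a left vertex covered by M i to a right vertex covered by M i belongs to no other
  M j: each M i is an induced matching of the union, and the M i are pairwise disjoint.\<close>

definition induced_bip_matchings :: "'i set \<Rightarrow> ('i \<Rightarrow> ('a \<times> 'b) set) \<Rightarrow> bool" where
  "induced_bip_matchings I M \<longleftrightarrow> (\<forall>i\<in>I. bip_matching (M i)) \<and>
     (\<forall>i\<in>I. \<forall>j\<in>I. \<forall>u v u' v'. (u, v') \<in> M i \<longrightarrow> (u', v) \<in> M i \<longrightarrow> (u, v) \<in> M j \<longrightarrow> i = j)"

lemma induced_bip_matchings_mono: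
  assumes "induced_bip_matchings I M" and "\<And>i. i \<in> I \<Longrightarrow> N i \<subseteq> M i"
  shows "induced_bip_matchings I N"
  using assms unfolding induced_bip_matchings_def bip_matching_def
  by (meson inj_on_subset subsetD)

lemma induced_bip_matchings_disjoint:
  assumes "induced_bip_matchings I M" "i \<in> I" "j \<in> I" "i \<noteq> j"
  shows "M i \<inter> M j = {}"
proof (rule equals0I)
  fix p assume "p \<in> M i \<inter> M j"
  then show False using assms unfolding induced_bip_matchings_def by (cases p) blast
qed

lemma ex_maximal_bip_matching:
  assumes "finite B"
  obtains M where "M \<subseteq> B" "bip_matching M"
    "\<And>u v. (u, v) \<in> B \<Longrightarrow> u \<in> fst ` M \<or> v \<in> snd ` M"
proof -
  define A where "A = {M. M \<subseteq> B \<and> bip_matching M}"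
  have "finite A" "A \<noteq> {}"
    using assms unfolding A_def bip_matching_def by auto
  then obtain M where "M \<in> A" "\<forall>M'\<in>A. M \<subseteq> M' \<longrightarrow> M = M'"
    by (meson finite_has_maximal)
  then have M: "M \<subseteq> B" "bip_matching M"
    and max: "\<And>M'. M' \<subseteq> B \<Longrightarrow> bip_matching M' \<Longrightarrow> M \<subseteq> M' \<Longrightarrow> M = M'"
    unfolding A_def by blast+
  have "u \<in> fst ` M \<or> v \<in> snd ` M" if "(u, v) \<in> B" for u v
  proof (rule ccontr)
    assume "\<not> ?thesis"
    then have new: "u \<notin> fst ` M" "v \<notin> snd ` M" by simp_all
    then have "bip_matching (insert (u, v) M)"
      using M(2) unfolding bip_matching_def inj_on_insert by auto
    then have "M = insert (u, v) M" using max M(1) that by blast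
    then show False using new(1) by (metis fst_conv image_eqI insertI1)
  qed
  then show thesis by (rule that[OF M])
qed

lemma min_bip_vertex_cover_le_matching:
  assumes "finite B" "B \<subseteq> V \<times> V" "min_bip_vertex_cover V B S"
  obtains M where "M \<subseteq> B" "bip_matching M" "card (fst S \<union> snd S) \<le> 2 * card M"
proof -
  obtain M where M: "M \<subseteq> B" "bip_matching M"
    and maximal: "\<And>u v. (u, v) \<in> B \<Longrightarrow> u \<in> fst ` M \<or> v \<in> snd ` M"
    using ex_maximal_bip_matching[OF assms(1)] by blast
  have "bip_vertex_cover V B (fst ` M, snd ` M)"
    using M(1) assms(2) unfolding bip_vertex_cover_def by (auto dest: maximal)
  then have "card (fst S) + card (snd S) \<le> card (fst ` M) + card (snd ` M)"
    using assms(3) unfolding min_bip_vertex_cover_def by fastforce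
  also have "\<dots> = 2 * card M"
    using M(2) by (simp add: bip_matching_def card_image)
  finally have "card (fst S) + card (snd S) \<le> 2 * card M" .
  then have "card (fst S \<union> snd S) \<le> 2 * card M"
    using card_Un_le[of "fst S" "snd S"] by linarith
  then show thesis by (rule that[OF M])
qed

lemma card_le_RS_max_edges:
  assumes "RS_graph n E"
  shows "card E \<le> RS_max_edges n"
proof -
  have "{card E |E. RS_graph n E} \<subseteq> card ` Pow (Pow {..<n})"
    unfolding RS_graph_def simple_graph_def by blast
  then have "finite {card E |E. RS_graph n E}" by (rule finite_subset) simp
  then show ?thesis unfolding RS_max_edges_def by (rule Max_ge) (use assms in blast)
qed

lemma RS_max_edges_0: "RS_max_edges 0 = 0"
proof -
  have "RS_graph 0 E \<longleftrightarrow> E = {}" for E :: "nat set set"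
    unfolding RS_graph_def simple_graph_def by auto
  then show ?thesis unfolding RS_max_edges_def by simp
qed

text \<open>No case distinction on RS_max_edges n is needed: if it is 0, then RS n = n^2/0 = 0 and
  n^2/RS n = 0 as well.\<close>

lemma sq_div_RS: "real n ^ 2 / RS n = real (RS_max_edges n)"
  by (cases "n = 0") (simp_all add: RS_def RS_max_edges_0)

lemma RS_graph_of_induced_matchings:
  assumes graph: "simple_graph {..<n} E" and E: "E = (\<Union>i\<in>I. N i)"
    and I: "finite I" "card I \<le> n"
    and disj: "\<And>i j. i \<in> I \<Longrightarrow> j \<in> I \<Longrightarrow> i \<noteq> j \<Longrightarrow> N i \<inter> N j = {}"
    and induced: "\<And>i. i \<in> I \<Longrightarrow> induced_matching E (N i)"
  shows "RS_graph n E"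
proof -
  obtain idx where idx: "bij_betw idx I {..<card I}"
    using ex_bij_betw_finite_nat[OF I(1)] by (auto simp: atLeast0LessThan)
  define lab where "lab e = idx (SOME i. i \<in> I \<and> e \<in> N i)" for e
  have lab: "lab e = idx i" if "i \<in> I" "e \<in> N i" for e i
  proof -
    have "(SOME i. i \<in> I \<and> e \<in> N i) = i"
      using that disj by (intro some_equality) blast+
    then show ?thesis unfolding lab_def by simp
  qed
  have class_idx: "{e \<in> E. lab e = idx i} = N i" if i: "i \<in> I" for i
  proof (intro equalityI subsetI)
    fix e assume "e \<in> {e \<in> E. lab e = idx i}"
    then obtain j where "j \<in> I" "e \<in> N j" "idx j = idx i" using lab unfolding E by auto
    moreover have "inj_on idx I" using idx by (rule bij_betw_imp_inj_on)
    ultimately show "e \<in> N i" using i by (metis inj_onD)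
  qed (use i lab E in auto)
  have class_empty: "{e \<in> E. lab e = j} = {}" if "j \<notin> idx ` I" for j
    using that lab unfolding E by blast
  have classes: "induced_matching E {e \<in> E. lab e = j}" for j
  proof (cases "j \<in> idx ` I")
    case True
    then obtain i where "i \<in> I" "j = idx i" by blast
    then show ?thesis using class_idx induced by simp
  next
    case False
    have "induced_matching E {}"
      using graph unfolding induced_matching_def simple_graph_def
      by (intro conjI exI[of _ "{}"]) auto
    then show ?thesis by (simp only: class_empty[OF False])
  qed
  have lab_lt: "lab e < n" if e: "e \<in> E" for e
  proof -
    obtain i where "i \<in> I" "e \<in> N i" using e E by blast
    then have "lab e \<in> idx ` I" using lab by simp
    then show ?thesis using idx I(2) unfolding bij_betw_def by auto
  qed
  show ?thesis
    unfolding RS_graph_def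
  proof (intro conjI exI[of _ lab])
    show "simple_graph {..<n} E" by (rule graph)
    show "\<forall>e\<in>E. lab e < n" using lab_lt by blast
    show "\<forall>i<n. induced_matching E {e \<in> E. lab e = i}" using classes by blast
  qed
qed

locale bip_embedding =
  fixes A :: "'a set" and B :: "'b set" and \<alpha> :: "'a \<Rightarrow> nat" and \<beta> :: "'b \<Rightarrow> nat" and n :: nat
  assumes inj_\<alpha>: "inj_on \<alpha> A" and inj_\<beta>: "inj_on \<beta> B"
    and range_\<alpha>: "\<alpha> ` A \<subseteq> {..<n}" and range_\<beta>: "\<beta> ` B \<subseteq> {..<n}"
    and disjoint_ranges: "\<alpha> ` A \<inter> \<beta> ` B = {}"
begin

definition edge :: "'a \<times> 'b \<Rightarrow> nat set" where
  "edge p = {\<alpha> (fst p), \<beta> (snd p)}"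

lemma left_ne_right: "u \<in> A \<Longrightarrow> v \<in> B \<Longrightarrow> \<alpha> u \<noteq> \<beta> v"
  using disjoint_ranges by blast

lemma left_in_edge:
  assumes "u \<in> A" "p \<in> A \<times> B" "\<alpha> u \<in> edge p"
  shows "u = fst p"
proof -
  have "\<alpha> u \<noteq> \<beta> (snd p)" using assms(1,2) left_ne_right by (simp add: mem_Times_iff)
  then have "\<alpha> u = \<alpha> (fst p)" using assms(3) by (simp add: edge_def)
  then show ?thesis using inj_onD[OF inj_\<alpha>] assms(1,2) by (simp add: mem_Times_iff)
qed

lemma right_in_edge:
  assumes "v \<in> B" "p \<in> A \<times> B" "\<beta> v \<in> edge p"
  shows "v = snd p"
proof -
  have "\<beta> v \<noteq> \<alpha> (fst p)" using assms(1,2) left_ne_right by (metis mem_Times_iff)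
  then have "\<beta> v = \<beta> (snd p)" using assms(3) by (simp add: edge_def)
  then show ?thesis using inj_onD[OF inj_\<beta>] assms(1,2) by (simp add: mem_Times_iff)
qed

lemma edge_meet:
  assumes p: "p \<in> A \<times> B" and q: "q \<in> A \<times> B" and x: "x \<in> edge p" "x \<in> edge q"
  shows "fst p = fst q \<or> snd p = snd q"
proof (cases "x = \<alpha> (fst p)")
  case True
  then show ?thesis using left_in_edge[OF _ q] p x(2) by (simp add: mem_Times_iff)
next
  case False
  then have "x = \<beta> (snd p)" using x(1) by (simp add: edge_def)
  then show ?thesis using right_in_edge[OF _ q] p x(2) by (simp add: mem_Times_iff)
qed

lemma inj_on_edge: "inj_on edge (A \<times> B)"
proof (rule inj_onI)
  fix p q assume p: "p \<in> A \<times> B" and q: "q \<in> A \<times> B" and pq: "edge p = edge q"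
  have "\<alpha> (fst p) \<in> edge q" "\<beta> (snd p) \<in> edge q" unfolding pq[symmetric] by (simp_all add: edge_def)
  then have "fst p = fst q" "snd p = snd q"
    using p left_in_edge[OF _ q] right_in_edge[OF _ q] by (simp_all add: mem_Times_iff)
  then show "p = q" by (simp add: prod_eq_iff)
qed

lemma finite_sides: "finite A" "finite B"
  using inj_on_finite[OF inj_\<alpha> range_\<alpha>] inj_on_finite[OF inj_\<beta> range_\<beta>] by simp_all

lemma simple_graph_edges:
  assumes "P \<subseteq> A \<times> B"
  shows "simple_graph {..<n} (edge ` P)"
  unfolding simple_graph_def
proof (intro conjI finite_lessThan subsetI)
  fix e assume "e \<in> edge ` P"
  then obtain u v where "u \<in> A" "v \<in> B" "e = {\<alpha> u, \<beta> v}"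
    using assms by (auto simp: edge_def)
  moreover have "\<alpha> u < n" "\<beta> v < n" using calculation range_\<alpha> range_\<beta> by auto
  ultimately show "e \<in> {{x, y} |x y. x \<in> {..<n} \<and> y \<in> {..<n} \<and> x \<noteq> y}"
    using left_ne_right by blast
qed

context
  fixes I :: "'i set" and M :: "'i \<Rightarrow> ('a \<times> 'b) set"
  assumes induced: "induced_bip_matchings I M" and sides: "\<And>i. i \<in> I \<Longrightarrow> M i \<subseteq> A \<times> B"
begin

lemma induced_matching_edges:
  assumes i: "i \<in> I"
  shows "induced_matching (\<Union>j\<in>I. edge ` M j) (edge ` M i)"
  unfolding induced_matching_def
proof (intro conjI ballI impI exI[of _ "\<Union>(edge ` M i)"])
  show "edge ` M i \<subseteq> (\<Union>j\<in>I. edge ` M j)" using i by blast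
next
  fix e1 e2 assume e: "e1 \<in> edge ` M i" "e2 \<in> edge ` M i" "e1 \<noteq> e2"
  then obtain p q where pq: "p \<in> M i" "q \<in> M i" "e1 = edge p" "e2 = edge q" by blast
  have "p = q" if "x \<in> e1" "x \<in> e2" for x
  proof -
    have "fst p = fst q \<or> snd p = snd q" using edge_meet pq sides[OF i] that by blast
    moreover have "bip_matching (M i)" using induced i unfolding induced_bip_matchings_def by blast
    ultimately show "p = q" using pq(1,2) unfolding bip_matching_def by (meson inj_onD)
  qed
  then show "e1 \<inter> e2 = {}" using e(3) pq by blast
next
  show "edge ` M i = {e \<in> \<Union>j\<in>I. edge ` M j. e \<subseteq> \<Union>(edge ` M i)}"
  proof (intro equalityI subsetI)
    fix e assume "e \<in> edge ` M i"
    then show "e \<in> {e \<in> \<Union>j\<in>I. edge ` M j. e \<subseteq> \<Union>(edge ` M i)}" using i by blast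
  next
    fix e assume "e \<in> {e \<in> \<Union>j\<in>I. edge ` M j. e \<subseteq> \<Union>(edge ` M i)}"
    then obtain j u v where j: "j \<in> I" "(u, v) \<in> M j" "e = edge (u, v)"
      and covered: "e \<subseteq> \<Union>(edge ` M i)" by auto
    obtain p where p: "p \<in> M i" "\<alpha> u \<in> edge p" using j(3) covered unfolding edge_def by auto
    obtain q where q: "q \<in> M i" "\<beta> v \<in> edge q" using j(3) covered unfolding edge_def by auto
    have uv: "(u, v) \<in> A \<times> B" using sides j by blast
    have "(u, snd p) \<in> M i" "(fst q, v) \<in> M i"
      using p q uv sides[OF i] left_in_edge[of u p] right_in_edge[of v q] by auto
    then have "j = i" using induced i j(1,2) unfolding induced_bip_matchings_def by blast
    then show "e \<in> edge ` M i" using j by blast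
  qed
qed

lemma sum_card_le_RS_max_edges:
  assumes I: "finite I" "card I \<le> n"
  shows "(\<Sum>i\<in>I. card (M i)) \<le> RS_max_edges n"
proof -
  define E where "E = (\<Union>i\<in>I. edge ` M i)"
  have inj: "inj_on edge (M i)" if "i \<in> I" for i
    using inj_on_subset[OF inj_on_edge sides[OF that]] .
  have disj: "edge ` M i \<inter> edge ` M j = {}" if "i \<in> I" "j \<in> I" "i \<noteq> j" for i j
    using induced_bip_matchings_disjoint[OF induced that] inj_on_image_Int[OF inj_on_edge]
      sides that(1,2) by (metis image_empty)
  have "simple_graph {..<n} E"
    unfolding E_def image_UN[symmetric] by (rule simple_graph_edges) (use sides in blast)
  then have "RS_graph n E"
    using I disj induced_matching_edges by (intro RS_graph_of_induced_matchings[OF _ E_def]) (simp_all add: E_def)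
  then have "card E \<le> RS_max_edges n" by (rule card_le_RS_max_edges)
  moreover have "card E = (\<Sum>i\<in>I. card (M i))"
  proof -
    have "finite (M i)" if "i \<in> I" for i
      using finite_subset[OF sides[OF that]] finite_sides by blast
    then have "card E = (\<Sum>i\<in>I. card (edge ` M i))"
      unfolding E_def using I(1) disj by (intro card_UN_disjoint) auto
    also have "\<dots> = (\<Sum>i\<in>I. card (M i))" using inj by (simp add: card_image)
    finally show ?thesis .
  qed
  ultimately show ?thesis by simp
qed

end

end

lemma card_le_sum_card_blocks:
  fixes g :: "'a \<Rightarrow> 'k"
  assumes K: "finite K" and P: "P \<subseteq> V \<times> V" and g: "g ` V \<subseteq> K"
  shows "card P \<le> (\<Sum>k\<in>K. \<Sum>l\<in>K. card (P \<inter> {u. g u = k} \<times> {v. g v = l}))"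
proof -
  have "P = (\<Union>k\<in>K. \<Union>l\<in>K. P \<inter> {u. g u = k} \<times> {v. g v = l})"
    using P g by fastforce
  then have "card P \<le> (\<Sum>k\<in>K. card (\<Union>l\<in>K. P \<inter> {u. g u = k} \<times> {v. g v = l}))"
    by (metis card_UN_le[OF K])
  also have "\<dots> \<le> (\<Sum>k\<in>K. \<Sum>l\<in>K. card (P \<inter> {u. g u = k} \<times> {v. g v = l}))"
    by (intro sum_mono card_UN_le[OF K])
  finally show ?thesis .
qed

lemma bip_embedding_blocks:
  assumes idx: "inj_on idx V" "idx ` V \<subseteq> {..<n}" and m: "0 < m" "2 * m \<le> n"
  shows "bip_embedding {u \<in> V. idx u div m = k} {v \<in> V. idx v div m = l}
    (\<lambda>u. idx u mod m) (\<lambda>v. m + idx v mod m) n"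
proof
  have mod_lt: "idx u mod m < m" for u using m(1) by simp
  have inj_mod: "inj_on (\<lambda>u. idx u mod m) {u \<in> V. idx u div m = k}" for k
  proof (rule inj_onI)
    fix u v assume u: "u \<in> {u \<in> V. idx u div m = k}" and v: "v \<in> {u \<in> V. idx u div m = k}"
      and "idx u mod m = idx v mod m"
    then have "idx u = idx v"
      using div_mult_mod_eq[of "idx u" m] div_mult_mod_eq[of "idx v" m] by simp
    then show "u = v" using inj_onD[OF idx(1)] u v by blast
  qed
  show "inj_on (\<lambda>u. idx u mod m) {u \<in> V. idx u div m = k}" by (rule inj_mod)
  show "inj_on (\<lambda>v. m + idx v mod m) {v \<in> V. idx v div m = l}"
    using inj_mod[of l] by (simp add: inj_on_def)
  have "idx u mod m < n" "m + idx u mod m < n" for u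
    using mod_lt[of u] m(2) by linarith+
  then show "(\<lambda>u. idx u mod m) ` {u \<in> V. idx u div m = k} \<subseteq> {..<n}"
    and "(\<lambda>v. m + idx v mod m) ` {v \<in> V. idx v div m = l} \<subseteq> {..<n}"
    by auto
  have "(\<lambda>u. idx u mod m) ` {u \<in> V. idx u div m = k} \<subseteq> {..<m}" using mod_lt by auto
  moreover have "(\<lambda>v. m + idx v mod m) ` {v \<in> V. idx v div m = l} \<subseteq> {m..}" by auto
  moreover have "{..<m} \<inter> {m..} = {}" by auto
  ultimately show "(\<lambda>u. idx u mod m) ` {u \<in> V. idx u div m = k} \<inter>
      (\<lambda>v. m + idx v mod m) ` {v \<in> V. idx v div m = l} = {}"
    by blast
qed

lemma sum_card_induced_bip_matchings_le:
  fixes M :: "'i \<Rightarrow> ('a \<times> 'a) set"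
  assumes V: "finite V" and I: "finite I" "card I \<le> card V"
    and induced: "induced_bip_matchings I M"
    and off_diag: "\<And>i. i \<in> I \<Longrightarrow> M i \<subseteq> {(u, v) \<in> V \<times> V. u \<noteq> v}"
  shows "(\<Sum>i\<in>I. card (M i)) \<le> 9 * RS_max_edges (card V)"
proof (cases "card V < 2")
  case True
  then have "M i = {}" if "i \<in> I" for i
    using off_diag[OF that] card_le_Suc0_iff_eq[OF V] by fastforce
  then show ?thesis by simp
next
  case False
  define n where "n = card V"
  define m where "m = n div 2"
  have m: "0 < m" "2 * m \<le> n" "n \<le> 3 * m" using False unfolding m_def n_def by linarith+
  obtain idx where "bij_betw idx V {..<n}"
    using ex_bij_betw_finite_nat[OF V] by (auto simp: atLeast0LessThan n_def)
  then have idx: "inj_on idx V" "idx ` V \<subseteq> {..<n}" by (auto simp: bij_betw_def)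
  \<comment> \<open>At most three blocks of m consecutive indices; since 2m \<le> n, the left copy of one block
    and the right copy of another fit side by side into [0, n).\<close>
  have blocks: "(\<lambda>u. idx u div m) ` V \<subseteq> {..<3}"
  proof
    fix k assume "k \<in> (\<lambda>u. idx u div m) ` V"
    then obtain u where "u \<in> V" "k = idx u div m" by blast
    then have "idx u < m * 3" using idx(2) m(3) by fastforce
    then show "k \<in> {..<3}" using \<open>k = idx u div m\<close> by (simp add: less_mult_imp_div_less)
  qed
  have piece: "(\<Sum>i\<in>I. card (M i \<inter> {u. idx u div m = k} \<times> {v. idx v div m = l}))
      \<le> RS_max_edges n" for k l
  proof -
    interpret bip_embedding "{u \<in> V. idx u div m = k}" "{v \<in> V. idx v div m = l}"
      "\<lambda>u. idx u mod m" "\<lambda>v. m + idx v mod m" n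
      using idx m(1,2) by (rule bip_embedding_blocks)
    show ?thesis
      using induced_bip_matchings_mono[OF induced] off_diag I(1)
      by (intro sum_card_le_RS_max_edges) (auto simp: I(2)[folded n_def])
  qed
  have "(\<Sum>i\<in>I. card (M i))
      \<le> (\<Sum>i\<in>I. \<Sum>k<3. \<Sum>l<3. card (M i \<inter> {u. idx u div m = k} \<times> {v. idx v div m = l}))"
    using off_diag blocks by (intro sum_mono card_le_sum_card_blocks) auto
  also have "\<dots> = (\<Sum>k<3. \<Sum>l<3. \<Sum>i\<in>I. card (M i \<inter> {u. idx u div m = k} \<times> {v. idx v div m = l}))"
    by (simp only: sum.swap[of _ I] sum.swap[of _ I "{..<3}"])
  also have "\<dots> \<le> (\<Sum>k<3::nat. \<Sum>l<3::nat. RS_max_edges n)"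
    by (intro sum_mono piece)
  finally show ?thesis by (simp add: n_def)
qed

lemma dist_self: "dist E u u = 0"
proof -
  have "walk E [u]" unfolding walk_def by simp
  then have "dist E u u \<le> enat (length [u] - 1)"
    unfolding dist_def by (intro INF_lower) simp
  then have "dist E u u \<le> 0" by (simp add: zero_enat_def)
  then show ?thesis by simp
qed

lemma Eab_off_diagonal:
  assumes "1 \<le> a + b"
  shows "Eab V E D \<chi> a b h \<subseteq> {(u, v) \<in> V \<times> V. u \<noteq> v}"
proof
  fix p assume "p \<in> Eab V E D \<chi> a b h"
  moreover obtain u v where p: "p = (u, v)" by force
  ultimately have uv: "(u, v) \<in> Eab V E D \<chi> a b h" by simp
  then have "h \<in> Hset V E u v" "dist E u h = enat a" "dist E h v = enat b"
    unfolding Eab_def by auto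
  then have "u = v \<Longrightarrow> enat (a + b) = 0" using dist_self[of E u] unfolding Hset_def by auto
  then show "p \<in> {(u, v) \<in> V \<times> V. u \<noteq> v}" using uv assms p by (auto simp: Eab_def zero_enat_def)
qed

lemma Eab_same_colour_eq:
  assumes "(u, v') \<in> Eab V E D \<chi> a b h" "(u', v) \<in> Eab V E D \<chi> a b h"
    and "(u, v) \<in> Eab V E D \<chi> a b h'" "\<chi> h = \<chi> h'" "h \<in> V"
  shows "h = h'"
proof -
  have "dist E u h = enat a" "dist E h v = enat b"
    using assms(1,2) unfolding Eab_def by auto
  moreover have h': "h' \<in> Hset V E u v" "inj_on \<chi> (Hset V E u v)"
    "dist E u h' = enat a" "dist E h' v = enat b"
    using assms(3) unfolding Eab_def by auto
  ultimately have "h \<in> Hset V E u v" using assms(5) unfolding Hset_def by auto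
  then show ?thesis using h' assms(4) by (meson inj_onD)
qed

lemma sum_card_Eab_matchings_le:
  assumes V: "finite V" and ab: "1 \<le> a + b" and colours: "\<chi> ` V \<subseteq> {1..K}"
    and sub: "\<And>h. h \<in> V \<Longrightarrow> M h \<subseteq> Eab V E D \<chi> a b h"
    and matching: "\<And>h. h \<in> V \<Longrightarrow> bip_matching (M h)"
  shows "(\<Sum>h\<in>V. card (M h)) \<le> K * (9 * RS_max_edges (card V))"
proof -
  have colour_class: "(\<Sum>h\<in>{h \<in> V. \<chi> h = c}. card (M h)) \<le> 9 * RS_max_edges (card V)" for c
  proof (rule sum_card_induced_bip_matchings_le[OF V])
    show "finite {h \<in> V. \<chi> h = c}" using V by simp
    show "card {h \<in> V. \<chi> h = c} \<le> card V" using V by (intro card_mono) auto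
    show "M h \<subseteq> {(u, v) \<in> V \<times> V. u \<noteq> v}" if "h \<in> {h \<in> V. \<chi> h = c}" for h
      using sub[of h] Eab_off_diagonal[OF ab, of V E D \<chi> h] that by simp
    show "induced_bip_matchings {h \<in> V. \<chi> h = c} M"
      unfolding induced_bip_matchings_def
    proof (intro conjI ballI allI impI)
      fix h assume "h \<in> {h \<in> V. \<chi> h = c}"
      then show "bip_matching (M h)" using matching by simp
    next
      fix h h' u v u' v'
      assume h: "h \<in> {h \<in> V. \<chi> h = c}" and h': "h' \<in> {h \<in> V. \<chi> h = c}"
        and "(u, v') \<in> M h" "(u', v) \<in> M h" "(u, v) \<in> M h'"
      then have "(u, v') \<in> Eab V E D \<chi> a b h" "(u', v) \<in> Eab V E D \<chi> a b h"
        "(u, v) \<in> Eab V E D \<chi> a b h'"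
        using sub[of h] sub[of h'] by auto
      then show "h = h'" by (rule Eab_same_colour_eq) (use h h' in simp_all)
    qed
  qed
  have "(\<Sum>h\<in>V. card (M h)) = (\<Sum>c\<in>{1..K}. \<Sum>h\<in>{h \<in> V. \<chi> h = c}. card (M h))"
    using sum.group[OF V _ colours, of "\<lambda>h. card (M h)"] by simp
  also have "\<dots> \<le> (\<Sum>c\<in>{1..K}. 9 * RS_max_edges (card V))"
    by (intro sum_mono colour_class)
  finally show ?thesis by simp
qed

lemma sum_card_Ex_le:
  assumes "finite V" "finite H" "finite T"
  shows "(\<Sum>v\<in>V. card {h \<in> H. \<exists>t\<in>T. R t v h}) \<le> (\<Sum>t\<in>T. \<Sum>h\<in>H. card {v \<in> V. R t v h})"
proof -
  have "card {h \<in> H. \<exists>t\<in>T. R t v h} \<le> (\<Sum>t\<in>T. card {h \<in> H. R t v h})" for v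
  proof -
    have "{h \<in> H. \<exists>t\<in>T. R t v h} = (\<Union>t\<in>T. {h \<in> H. R t v h})" by blast
    then show ?thesis by (simp only: card_UN_le[OF assms(3)])
  qed
  then have "(\<Sum>v\<in>V. card {h \<in> H. \<exists>t\<in>T. R t v h}) \<le> (\<Sum>v\<in>V. \<Sum>t\<in>T. card {h \<in> H. R t v h})"
    by (rule sum_mono)
  also have "\<dots> = (\<Sum>t\<in>T. \<Sum>v\<in>V. card {h \<in> H. R t v h})" by (rule sum.swap)
  also have "\<dots> = (\<Sum>t\<in>T. \<Sum>h\<in>H. card {v \<in> V. R t v h})"
  proof (rule sum.cong[OF refl])
    fix t
    show "(\<Sum>v\<in>V. card {h \<in> H. R t v h}) = (\<Sum>h\<in>H. card {v \<in> V. R t v h})"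
      using sum.swap_restrict[OF assms(1,2), of "\<lambda>_ _. 1::nat" "R t"] by simp
  qed
  finally show ?thesis .
qed

lemma card_pairs_sum_le:
  assumes "1 \<le> D"
  shows "card {(a, b). 1 \<le> a + b \<and> a + b \<le> (D::nat)} \<le> 4 * D ^ 2"
proof -
  have "card {(a, b). 1 \<le> a + b \<and> a + b \<le> D} \<le> card ({..D} \<times> {..D})"
    by (rule card_mono) auto
  also have "\<dots> = (D + 1) ^ 2" by (simp add: power2_eq_square)
  also have "\<dots> \<le> (2 * D) ^ 2" using assms by (intro power_mono) auto
  finally show ?thesis by (simp add: power_mult_distrib)
qed

lemma sum_card_min_bip_vertex_covers_le:
  assumes V: "finite V" and ab: "1 \<le> a + b" and colours: "\<chi> ` V \<subseteq> {1..K}"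
    and cover: "\<And>h. h \<in> V \<Longrightarrow> min_bip_vertex_cover V (Eab V E D \<chi> a b h) (S h)"
  shows "(\<Sum>h\<in>V. card (fst (S h) \<union> snd (S h))) \<le> 18 * K * RS_max_edges (card V)"
proof -
  have "\<exists>M. M \<subseteq> Eab V E D \<chi> a b h \<and> bip_matching M \<and> card (fst (S h) \<union> snd (S h)) \<le> 2 * card M"
    if h: "h \<in> V" for h
  proof -
    have B: "Eab V E D \<chi> a b h \<subseteq> V \<times> V" by (auto simp: Eab_def)
    then have "finite (Eab V E D \<chi> a b h)" using V finite_subset by blast
    then obtain M where "M \<subseteq> Eab V E D \<chi> a b h" "bip_matching M"
      "card (fst (S h) \<union> snd (S h)) \<le> 2 * card M"
      using B cover[OF h] by (rule min_bip_vertex_cover_le_matching)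
    then show ?thesis by blast
  qed
  then have "\<forall>h\<in>V. \<exists>M. M \<subseteq> Eab V E D \<chi> a b h \<and> bip_matching M \<and>
      card (fst (S h) \<union> snd (S h)) \<le> 2 * card M" by blast
  from bchoice[OF this] obtain M where M: "\<forall>h\<in>V. M h \<subseteq> Eab V E D \<chi> a b h \<and>
      bip_matching (M h) \<and> card (fst (S h) \<union> snd (S h)) \<le> 2 * card (M h)" ..
  have "(\<Sum>h\<in>V. card (fst (S h) \<union> snd (S h))) \<le> (\<Sum>h\<in>V. 2 * card (M h))"
    by (rule sum_mono) (use M in blast)
  also have "\<dots> = 2 * (\<Sum>h\<in>V. card (M h))" by (simp add: sum_distrib_left)
  also have "(\<Sum>h\<in>V. card (M h)) \<le> K * (9 * RS_max_edges (card V))"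
    by (rule sum_card_Eab_matchings_le[OF V ab colours]) (use M in blast)+
  then have "2 * (\<Sum>h\<in>V. card (M h)) \<le> 2 * (K * (9 * RS_max_edges (card V)))" by simp
  finally show ?thesis by simp
qed

lemma sum_card_cover_hits_le:
  fixes V :: "'a set" and VC :: "nat \<Rightarrow> nat \<Rightarrow> 'a \<Rightarrow> 'a set \<times> 'a set"
  assumes V: "finite V" and D: "1 \<le> D" and colours: "\<chi> ` V \<subseteq> {1..D ^ 3}"
    and VC: "\<And>a b h. 1 \<le> a + b \<Longrightarrow> a + b \<le> D \<Longrightarrow> h \<in> V \<Longrightarrow>
      min_bip_vertex_cover V (Eab V E D \<chi> a b h) (VC a b h)"
  shows "(\<Sum>v\<in>V. card {h \<in> V. \<exists>a b. 1 \<le> a + b \<and> a + b \<le> D \<and>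
                                   v \<in> fst (VC a b h) \<union> snd (VC a b h)})
      \<le> 72 * D ^ 5 * RS_max_edges (card V)"
proof -
  define T where "T = {(a, b). 1 \<le> a + b \<and> a + b \<le> D}"
  define S where "S t h = fst (VC (fst t) (snd t) h) \<union> snd (VC (fst t) (snd t) h)" for t h
  define R where "R = RS_max_edges (card V)"
  have "T \<subseteq> {..D} \<times> {..D}" unfolding T_def by auto
  then have T: "finite T" "card T \<le> 4 * D ^ 2"
    using finite_subset card_pairs_sum_le[OF D] unfolding T_def by auto
  have per_pair: "(\<Sum>h\<in>V. card {v \<in> V. v \<in> S t h}) \<le> 18 * D ^ 3 * R" if t: "t \<in> T" for t
  proof -
    have "{v \<in> V. v \<in> S t h} = S t h" if "h \<in> V" for h
      using VC[of "fst t" "snd t" h] t that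
      unfolding S_def T_def min_bip_vertex_cover_def bip_vertex_cover_def by auto
    then have "(\<Sum>h\<in>V. card {v \<in> V. v \<in> S t h}) = (\<Sum>h\<in>V. card (S t h))" by simp
    also have "\<dots> \<le> 18 * D ^ 3 * R"
    proof -
      have "1 \<le> fst t + snd t" "fst t + snd t \<le> D" using t by (auto simp: T_def)
      then show ?thesis
        unfolding S_def R_def using VC
        by (intro sum_card_min_bip_vertex_covers_le[where E = E and D = D, OF V _ colours]) auto
    qed
    finally show ?thesis .
  qed
  have "(\<Sum>v\<in>V. card {h \<in> V. \<exists>a b. 1 \<le> a + b \<and> a + b \<le> D \<and>
                                   v \<in> fst (VC a b h) \<union> snd (VC a b h)})
      = (\<Sum>v\<in>V. card {h \<in> V. \<exists>t\<in>T. v \<in> S t h})"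
    unfolding S_def T_def by (intro sum.cong refl arg_cong[where f = card]) auto
  also have "\<dots> \<le> (\<Sum>t\<in>T. \<Sum>h\<in>V. card {v \<in> V. v \<in> S t h})"
    by (rule sum_card_Ex_le[OF V V T(1)])
  also have "\<dots> \<le> card T * (18 * D ^ 3 * R)"
    using sum_mono[OF per_pair] by simp
  also have "\<dots> \<le> 4 * D ^ 2 * (18 * D ^ 3 * R)"
    using T(2) by (rule mult_le_mono1)
  also have "\<dots> = 72 * D ^ 5 * R" by (simp add: power_add[of D 2 3, simplified])
  finally show ?thesis unfolding R_def .
qed

theorem lemma2:
  shows "\<exists>C :: real. \<forall>(V :: nat set) (E :: nat set set) (D :: nat) (\<chi> :: nat \<Rightarrow> nat)
            (VC :: nat \<Rightarrow> nat \<Rightarrow> nat \<Rightarrow> nat set \<times> nat set).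
     simple_graph V E \<longrightarrow> D \<ge> 1 \<longrightarrow> (\<forall>v \<in> V. \<chi> v \<in> {1..D ^ 3}) \<longrightarrow>
     (\<forall>a b h. 1 \<le> a + b \<longrightarrow> a + b \<le> D \<longrightarrow> h \<in> V \<longrightarrow>
         min_bip_vertex_cover V (Eab V E D \<chi> a b h) (VC a b h)) \<longrightarrow>
     real (\<Sum>v \<in> V. card {h \<in> V. \<exists>a b. 1 \<le> a + b \<and> a + b \<le> D \<and>
                                   v \<in> fst (VC a b h) \<union> snd (VC a b h)})
       \<le> C * real D ^ 5 * (real (card V) ^ 2 / RS (card V))"
proof (intro exI[of _ 72] allI impI)
  fix V :: "nat set" and E :: "nat set set" and D :: nat and \<chi> :: "nat \<Rightarrow> nat"
    and VC :: "nat \<Rightarrow> nat \<Rightarrow> nat \<Rightarrow> nat set \<times> nat set"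
  assume "simple_graph V E" "D \<ge> 1" "\<forall>v \<in> V. \<chi> v \<in> {1..D ^ 3}"
    "\<forall>a b h. 1 \<le> a + b \<longrightarrow> a + b \<le> D \<longrightarrow> h \<in> V \<longrightarrow>
       min_bip_vertex_cover V (Eab V E D \<chi> a b h) (VC a b h)"
  then have "(\<Sum>v \<in> V. card {h \<in> V. \<exists>a b. 1 \<le> a + b \<and> a + b \<le> D \<and>
                                   v \<in> fst (VC a b h) \<union> snd (VC a b h)})
      \<le> 72 * D ^ 5 * RS_max_edges (card V)" (is "?X \<le> _")
    by (intro sum_card_cover_hits_le) (auto simp: simple_graph_def)
  then have "real ?X \<le> real (72 * D ^ 5 * RS_max_edges (card V))" by (simp only: of_nat_le_iff)
  then show "real ?X \<le> 72 * real D ^ 5 * (real (card V) ^ 2 / RS (card V))"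
    unfolding sq_div_RS by simp
qed

end
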